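(* Let $s>2$ be a rational number that is not an integer, let $t>1$ be an integer with $p=st$ an integer, and write $q=\lceil s\rceil$. Let $\xi_1,\dots,\xi_q$ be positive integers with $\xi_{q-1}\binom{p-t}{(q-2)t+1}=\xi_q$, $\binom{p-t}{(r-1)t+1}\xi_r=\binom{p-t}{rt}\xi_{r+1}$ for $2\le r\le q-2$, and $(p-t)\xi_1=t\binom{p-t}{t}\xi_2$. Let $\mathcal{C}$ be the array code (over a finite field $\mathbb{F}$, with $t$ rows, entries in $\mathbb{F}^p$ with basis $x_1,\dots,x_p$) whose columns are: (Type $T_1$) for each $t$-subset $A\subseteq\{1,\dots,p\}$, $\xi_1$ columns with cells $x_a$, $a\in A$; (Type $T_r$, $2\le r\le q-1$) for each $(t-1)$-subset $B$ and each $((r-1)t+1)$-subset $C\subseteq\{1,\dots,p\}\setminus B$, $\xi_r$ columns with cells $x_b$ ($b\in B$) and one cell $\sum_{c\in C}x_c$; (Type $T_q$) for each $(t-1)$-subset $B$, $\xi_q$ columns with cells $x_b$ ($b\in B$) and one cell $\sum_{c\notin B}x_c$. Then for every $i\in\{1,\dots,p\}$, the columns of $\mathcal{C}$ that do not have a cell equal to $x_i$ can be partitioned into pairs such that, for each pair, $x_i$ lies in the linear span of the $2t$ cells of the two columns.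
   Context: Columns of an array code are called servers and its entries cells; a cell equal to a single basis vector $x_i$ is called a singleton. *)

theory Defs
  imports Complex_Main "HOL-Library.Function_Algebras"
begin

text \<open>Vectors of F^p are represented as functions nat => F supported on {1..p};
  the basis vector x_a is basis_vec a.\<close>

definition basis_vec :: "nat \<Rightarrow> nat \<Rightarrow> 'a::field" where
  "basis_vec a = (\<lambda>j. if j = a then 1 else 0)"

definition fscale :: "'a::field \<Rightarrow> (nat \<Rightarrow> 'a) \<Rightarrow> (nat \<Rightarrow> 'a)" where
  "fscale c v = (\<lambda>j. c * v j)"

abbreviation fspan :: "(nat \<Rightarrow> 'a::field) set \<Rightarrow> (nat \<Rightarrow> 'a) set" where
  "fspan S \<equiv> module.span fscale S"

text \<open>Column labels (r, B, C, k): type r, the set of singleton indices B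
  (for type 1 this is the t-set A), the set C (empty for types 1 and q),
  and a copy index k < xi r.\<close>
type_synonym label = "nat \<times> nat set \<times> nat set \<times> nat"

definition array_code :: "nat \<Rightarrow> nat \<Rightarrow> nat \<Rightarrow> (nat \<Rightarrow> nat) \<Rightarrow> label set" where
  "array_code p t q xi =
     {(1, A, {}, k) | A k. A \<subseteq> {1..p} \<and> card A = t \<and> k < xi 1}
   \<union> {(r, B, C, k) | r B C k. 2 \<le> r \<and> r \<le> q - 1 \<and> B \<subseteq> {1..p} \<and> card B = t - 1
        \<and> C \<subseteq> {1..p} - B \<and> card C = (r - 1) * t + 1 \<and> k < xi r}
   \<union> {(q, B, {}, k) | B k. B \<subseteq> {1..p} \<and> card B = t - 1 \<and> k < xi q}"

definition cells :: "nat \<Rightarrow> nat \<Rightarrow> label \<Rightarrow> (nat \<Rightarrow> 'a::field) set" where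
  "cells p q l = (case l of (r, B, C, k) \<Rightarrow>
     if r = 1 then basis_vec ` B
     else if r < q then basis_vec ` B \<union> {(\<Sum>c\<in>C. basis_vec c)}
     else basis_vec ` B \<union> {(\<Sum>c\<in>{1..p} - B. basis_vec c)})"

end

theory Submission
  imports Defs "HOL-Library.Disjoint_Sets"
begin

text \<open>A column has no cell equal to \<open>x\<^sub>i\<close> exactly when \<open>i\<close> is not among its
  singleton indices. These columns fall into blocks \<open>j = 1, \<dots>, q - 1\<close>: on the left the type-\<open>j\<close>
  columns not involving \<open>i\<close> at all, on the right the type-\<open>(j + 1)\<close> columns involving \<open>i\<close> only
  through their sum cell (for \<open>j = q - 1\<close>: all type-\<open>q\<close> columns avoiding \<open>x\<^sub>i\<close>). A left and a
  right column are joined if the sum cell of the right one is \<open>x\<^sub>i\<close> plus the cells of the left one,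
  or, in the last block, if the singletons of the right column cover everything in
  \<open>{1..p} - {i}\<close> that the left column misses; either way the two columns span \<open>x\<^sub>i\<close>.
  The join relation between supports is biregular, and the hypotheses on the \<open>\<xi>\<^sub>r\<close> say exactly
  that both sides have the same degree once each support is taken with its number of copies.
  A regular bipartite graph has a perfect matching by Hall's theorem, and the matched pairs
  form the required partition.\<close>

section \<open>Hall's theorem and perfect matchings\<close>

definition sdr :: "('i \<Rightarrow> 'b) \<Rightarrow> 'i set \<Rightarrow> ('i \<Rightarrow> 'b set) \<Rightarrow> bool" where
  "sdr R I A \<longleftrightarrow> inj_on R I \<and> (\<forall>i\<in>I. R i \<in> A i)"

definition hall_condition :: "'i set \<Rightarrow> ('i \<Rightarrow> 'b set) \<Rightarrow> bool" where
  "hall_condition I A \<longleftrightarrow> (\<forall>J\<subseteq>I. card J \<le> card (\<Union>(A ` J)))"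

lemma sdr_fun_upd:
  assumes "sdr R I (\<lambda>i. A i - {y})" "i0 \<notin> I" "y \<in> A i0"
  shows "sdr (R(i0 := y)) (insert i0 I) A"
  using assms by (auto simp: sdr_def inj_on_def)

lemma sdr_if_Un:
  assumes R1: "sdr R1 J A" and R2: "sdr R2 K (\<lambda>i. A i - \<Union>(A ` J))"
  shows "sdr (\<lambda>i. if i \<in> J then R1 i else R2 i) (J \<union> K) A"
proof -
  have "R1 ` J \<subseteq> \<Union>(A ` J)" "R2 ` K \<inter> \<Union>(A ` J) = {}" using R1 R2 by (auto simp: sdr_def)
  then have "inj_on (\<lambda>i. if i \<in> J then R1 i else R2 i) (J \<union> (K - J))"
    using R1 R2 unfolding sdr_def inj_on_def by (simp split: if_splits) blast
  then show ?thesis using R1 R2 unfolding sdr_def by auto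
qed

lemma hall_condition_Diff_singleton:
  assumes fin: "finite I" "\<And>i. i \<in> I \<Longrightarrow> finite (A i)"
    and surplus: "\<And>J. J \<subseteq> I \<Longrightarrow> J \<noteq> {} \<Longrightarrow> J \<noteq> I \<Longrightarrow> card J < card (\<Union>(A ` J))"
    and i0: "i0 \<in> I"
  shows "hall_condition (I - {i0}) (\<lambda>i. A i - {y})"
  unfolding hall_condition_def
proof (intro allI impI)
  fix J assume J: "J \<subseteq> I - {i0}"
  show "card J \<le> card (\<Union>i\<in>J. A i - {y})"
  proof (cases "J = {}")
    case False
    have "finite (\<Union>(A ` J))"
      using J fin by (intro finite_UN_I) (auto intro: finite_subset)
    then have "card (\<Union>(A ` J)) - 1 \<le> card (\<Union>(A ` J) - {y})"
      using diff_card_le_card_Diff[of "{y}"] by simp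
    moreover have "card J < card (\<Union>(A ` J))" using J i0 False by (intro surplus) auto
    moreover have "(\<Union>i\<in>J. A i - {y}) = \<Union>(A ` J) - {y}" by blast
    ultimately show ?thesis by simp
  qed simp
qed

lemma hall_condition_Diff_critical:
  assumes fin: "finite I" "\<And>i. i \<in> I \<Longrightarrow> finite (A i)" and hall: "hall_condition I A"
    and J0: "J0 \<subseteq> I" "card (\<Union>(A ` J0)) = card J0"
  shows "hall_condition (I - J0) (\<lambda>i. A i - \<Union>(A ` J0))"
  unfolding hall_condition_def
proof (intro allI impI)
  fix K assume K: "K \<subseteq> I - J0"
  have finK: "finite K" "finite J0" using finite_subset K J0(1) fin(1) by auto
  have fin_union: "finite (\<Union>(A ` (K \<union> J0)))" using K J0(1) finK fin(2) by (intro finite_UN_I) auto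
  have sub: "\<Union>(A ` J0) \<subseteq> \<Union>(A ` (K \<union> J0))" by blast
  have "(\<Union>i\<in>K. A i - \<Union>(A ` J0)) = \<Union>(A ` (K \<union> J0)) - \<Union>(A ` J0)" by blast
  then have "card (\<Union>i\<in>K. A i - \<Union>(A ` J0)) = card (\<Union>(A ` (K \<union> J0))) - card J0"
    using card_Diff_subset[OF finite_subset[OF sub fin_union] sub] J0(2) by simp
  moreover have "card (K \<union> J0) \<le> card (\<Union>(A ` (K \<union> J0)))"
    using hall \<open>K \<subseteq> I - J0\<close> J0(1) unfolding hall_condition_def by (metis Diff_subset Un_least order_trans)
  moreover have "card (K \<union> J0) = card K + card J0"
    using K finK by (intro card_Un_disjoint) auto
  ultimately show "card K \<le> card (\<Union>i\<in>K. A i - \<Union>(A ` J0))" by linarith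
qed

text \<open>Hall's marriage theorem, by the Halmos--Vaughan induction: either every nonempty proper
  subfamily has surplus, and any element may be assigned to any index, or some subfamily is
  critical, and one matches it and its complement separately.\<close>
theorem hall_marriage:
  assumes "finite I" "\<And>i. i \<in> I \<Longrightarrow> finite (A i)" "hall_condition I A"
  shows "\<exists>R. sdr R I A"
  using assms
proof (induction "card I" arbitrary: I A rule: less_induct)
  case less
  show ?case
  proof (cases "\<exists>J0. J0 \<subseteq> I \<and> J0 \<noteq> {} \<and> J0 \<noteq> I \<and> card (\<Union>(A ` J0)) \<le> card J0")
    case True
    then obtain J0 where J0: "J0 \<subseteq> I" "J0 \<noteq> {}" "J0 \<noteq> I" "card (\<Union>(A ` J0)) \<le> card J0" by blast
    have fin: "finite J0" using J0(1) less.prems(1) finite_subset by blast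
    have "card J0 \<le> card (\<Union>(A ` J0))" using less.prems(3) J0(1) unfolding hall_condition_def by blast
    then have critical: "card (\<Union>(A ` J0)) = card J0" using J0(4) by linarith
    have "card J0 < card I" using J0 less.prems(1) by (meson psubsetI psubset_card_mono)
    moreover have "hall_condition J0 A" using less.prems(3) J0(1) by (auto simp: hall_condition_def)
    ultimately obtain R1 where R1: "sdr R1 J0 A"
      using less.hyps[of J0 A] fin less.prems(2) J0(1) by blast
    have "card (I - J0) < card I"
      using J0 fin \<open>card J0 < card I\<close> card_gt_0_iff[of J0] by (simp add: card_Diff_subset)
    moreover have "hall_condition (I - J0) (\<lambda>i. A i - \<Union>(A ` J0))"
      using hall_condition_Diff_critical[OF less.prems J0(1) critical] .
    ultimately obtain R2 where R2: "sdr R2 (I - J0) (\<lambda>i. A i - \<Union>(A ` J0))"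
      using less.hyps[of "I - J0" "\<lambda>i. A i - \<Union>(A ` J0)"] less.prems(1,2) by blast
    have "J0 \<union> (I - J0) = I" using J0(1) by blast
    then show ?thesis using sdr_if_Un[OF R1 R2] by auto
  next
    case False
    show ?thesis
    proof (cases "I = {}")
      case nonempty: False
      then obtain i0 where i0: "i0 \<in> I" by blast
      have "card {i0} \<le> card (A i0)" using less.prems(3) i0 unfolding hall_condition_def by force
      then obtain y where y: "y \<in> A i0" by fastforce
      have "card (I - {i0}) < card I" using less.prems(1) i0 by (rule card_Diff1_less)
      moreover have "hall_condition (I - {i0}) (\<lambda>i. A i - {y})"
        using False less.prems(1,2) i0 by (intro hall_condition_Diff_singleton) (auto simp: not_le)
      ultimately obtain R where "sdr R (I - {i0}) (\<lambda>i. A i - {y})"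
        using less.hyps[of "I - {i0}" "\<lambda>i. A i - {y}"] less.prems(1,2) by blast
      moreover have "insert i0 (I - {i0}) = I" using i0 by blast
      ultimately show ?thesis using sdr_fun_upd[of R "I - {i0}" A y i0] y by auto
    qed (simp add: sdr_def)
  qed
qed

lemma card_Sigma_const:
  assumes "finite J" "\<And>x. x \<in> J \<Longrightarrow> finite (F x)" "\<And>x. x \<in> J \<Longrightarrow> card (F x) = d"
  shows "card (SIGMA x:J. F x) = card J * d"
proof -
  have "card (SIGMA x:J. F x) = (\<Sum>x\<in>J. card (F x))" using assms by simp
  also have "\<dots> = card J * d" using assms(3) by simp
  finally show ?thesis .
qed

lemma regular_bipartite_perfect_matching:
  assumes fin: "finite L" "finite R" and d: "0 < d"
    and deg_L: "\<And>x. x \<in> L \<Longrightarrow> card {y\<in>R. E x y} = d"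
    and deg_R: "\<And>y. y \<in> R \<Longrightarrow> card {x\<in>L. E x y} = d"
  shows "\<exists>h. bij_betw h L R \<and> (\<forall>x\<in>L. E x (h x))"
proof -
  define A where "A x = {y\<in>R. E x y}" for x
  have edges_from: "card (SIGMA x:J. A x) = card J * d" if "J \<subseteq> L" for J
    using that fin deg_L finite_subset unfolding A_def by (intro card_Sigma_const) auto
  have edges_into: "card (SIGMA y:N. {x\<in>L. E x y}) = card N * d" if "N \<subseteq> R" for N
    using that fin deg_R finite_subset by (intro card_Sigma_const) auto
  have swap: "(SIGMA x:J. A x) \<subseteq> prod.swap ` (SIGMA y:\<Union>(A ` J). {x\<in>L. E x y})" if "J \<subseteq> L" for J
    using that by (auto simp: A_def image_iff)
  have "hall_condition L A"
    unfolding hall_condition_def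
  proof (intro allI impI)
    fix J assume J: "J \<subseteq> L"
    have N: "\<Union>(A ` J) \<subseteq> R" by (auto simp: A_def)
    have "finite (SIGMA y:\<Union>(A ` J). {x\<in>L. E x y})"
      using N fin by (intro finite_SigmaI) (auto intro: finite_subset)
    then have "card J * d \<le> card (prod.swap ` (SIGMA y:\<Union>(A ` J). {x\<in>L. E x y}))"
      using card_mono[OF finite_imageI swap[OF J]] edges_from[OF J] by simp
    also have "\<dots> = card (\<Union>(A ` J)) * d"
      using edges_into[OF N] by (simp add: card_image swap_inj_on)
    finally show "card J \<le> card (\<Union>(A ` J))" using d by simp
  qed
  then obtain h where h: "inj_on h L" "\<forall>x\<in>L. h x \<in> A x"
    using hall_marriage[of L A] fin by (auto simp: A_def sdr_def)
  have "(SIGMA x:L. A x) = prod.swap ` (SIGMA y:R. {x\<in>L. E x y})"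
    by (auto simp: A_def image_iff)
  then have "card L = card R"
    using edges_from[of L] edges_into[of R] d by (simp add: card_image swap_inj_on)
  moreover have "h ` L \<subseteq> R" using h(2) by (auto simp: A_def)
  ultimately have "h ` L = R" using card_image[OF h(1)] fin(2) by (simp add: card_subset_eq)
  then show ?thesis using h by (auto simp: bij_betw_def A_def)
qed

lemma pair_partition_of_bij_betw:
  assumes h: "bij_betw h L R" and LR: "L \<inter> R = {}" and P: "\<And>l. l \<in> L \<Longrightarrow> P l (h l)"
  shows "\<exists>M. (\<forall>e\<in>M. \<exists>c d. e = {c, d} \<and> c \<noteq> d \<and> P c d) \<and> \<Union>M = L \<union> R
    \<and> (\<forall>e\<in>M. \<forall>e'\<in>M. e \<noteq> e' \<longrightarrow> e \<inter> e' = {})"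
proof -
  have hL: "h ` L = R" "inj_on h L" using h by (auto simp: bij_betw_def)
  then have hR: "h l \<in> R" if "l \<in> L" for l using that by blast
  define M where "M = (\<lambda>l. {l, h l}) ` L"
  have pairs: "\<forall>e\<in>M. \<exists>c d. e = {c, d} \<and> c \<noteq> d \<and> P c d"
  proof
    fix e assume "e \<in> M"
    then obtain l where "l \<in> L" "e = {l, h l}" by (auto simp: M_def)
    moreover from this have "l \<noteq> h l" using hR LR by (metis IntI empty_iff)
    ultimately show "\<exists>c d. e = {c, d} \<and> c \<noteq> d \<and> P c d" using P by blast
  qed
  have cover: "\<Union>M = L \<union> R" using hL(1) by (auto simp: M_def)
  have disjoint: "\<forall>e\<in>M. \<forall>e'\<in>M. e \<noteq> e' \<longrightarrow> e \<inter> e' = {}"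
  proof (intro ballI impI)
    fix e e' assume "e \<in> M" "e' \<in> M" "e \<noteq> e'"
    then obtain l l' where l: "l \<in> L" "l' \<in> L" "e = {l, h l}" "e' = {l', h l'}" by (auto simp: M_def)
    with \<open>e \<noteq> e'\<close> have "l \<noteq> l'" by blast
    then have "h l \<noteq> h l'" using hL(2) l(1,2) by (auto dest: inj_onD)
    moreover have "l \<noteq> h l'" "h l \<noteq> l'" using hR l(1,2) LR by blast+
    ultimately show "e \<inter> e' = {}" using \<open>l \<noteq> l'\<close> l(3,4) by auto
  qed
  show ?thesis by (intro exI[of _ M] conjI pairs cover disjoint)
qed

definition column :: "nat \<Rightarrow> (nat set \<times> nat set) \<times> nat \<Rightarrow> label" where
  "column r = (\<lambda>((B, C), k). (r, B, C, k))"

definition support :: "label \<Rightarrow> nat set \<times> nat set" where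
  "support l = (case l of (r, B, C, k) \<Rightarrow> (B, C))"

lemma column_apply [simp]: "column r ((B, C), k) = (r, B, C, k)"
  by (simp add: column_def)

lemma support_apply [simp]: "support (r, B, C, k) = (B, C)"
  by (simp add: support_def)

lemma inj_on_column: "inj_on (column r) X"
  by (rule inj_onI) (auto simp: column_def split: prod.splits)

lemma column_image_iff:
  "(r, B, C, k) \<in> column j ` (X \<times> {..<a}) \<longleftrightarrow> r = j \<and> (B, C) \<in> X \<and> k < a"
  by (force simp: column_def)

lemma card_column_image: "card (column r ` (X \<times> {..<a})) = card X * a"
  by (simp add: card_image[OF inj_on_column] card_cartesian_product)

lemma column_image_Collect:
  "{l \<in> column r ` (X \<times> {..<a}). P (support l)} = column r ` ({x\<in>X. P x} \<times> {..<a})"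
  by (force simp: column_def)

lemma biregular_copies_perfect_matching:
  assumes fin: "finite X" "finite Y"
    and deg_X: "\<And>x. x \<in> X \<Longrightarrow> card {y\<in>Y. E x y} = dX"
    and deg_Y: "\<And>y. y \<in> Y \<Longrightarrow> card {x\<in>X. E x y} = dY"
    and balance: "dX * b = dY * a" and pos: "0 < dX * b"
  shows "\<exists>H. bij_betw H (column r ` (X \<times> {..<a})) (column r' ` (Y \<times> {..<b}))
           \<and> (\<forall>l\<in>column r ` (X \<times> {..<a}). E (support l) (support (H l)))"
proof (rule regular_bipartite_perfect_matching[OF _ _ pos])
  show "finite (column r ` (X \<times> {..<a}))" "finite (column r' ` (Y \<times> {..<b}))" using fin by auto
next
  fix l assume "l \<in> column r ` (X \<times> {..<a})"
  then have "support l \<in> X" by (auto simp: column_def)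
  then show "card {l' \<in> column r' ` (Y \<times> {..<b}). E (support l) (support l')} = dX * b"
    by (simp add: column_image_Collect card_column_image deg_X)
next
  fix l' assume "l' \<in> column r' ` (Y \<times> {..<b})"
  then have "support l' \<in> Y" by (auto simp: column_def)
  then show "card {l \<in> column r ` (X \<times> {..<a}). E (support l) (support l')} = dX * b"
    using balance column_image_Collect[of r X a "\<lambda>x. E x (support l')"]
    by (simp add: card_column_image deg_Y)
qed

lemma module_fscale: "module (fscale :: 'a::field \<Rightarrow> (nat \<Rightarrow> 'a) \<Rightarrow> _)"
  by unfold_locales (auto simp: fscale_def fun_eq_iff algebra_simps)

lemma sum_basis_vec_apply:
  "finite X \<Longrightarrow> (\<Sum>c\<in>X. basis_vec c) j = (if j \<in> X then (1::'a::field) else 0)"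
  by (induction X rule: finite_induct) (auto simp: basis_vec_def)

lemma basis_vec_eq_iff [simp]: "(basis_vec a :: nat \<Rightarrow> 'a::field) = basis_vec b \<longleftrightarrow> a = b"
  by (metis basis_vec_def zero_neq_one)

lemma basis_vec_in_image_iff [simp]: "(basis_vec i :: nat \<Rightarrow> 'a::field) \<in> basis_vec ` B \<longleftrightarrow> i \<in> B"
  by auto

lemma basis_vec_neq_sum:
  assumes "finite X" "2 \<le> card X"
  shows "(basis_vec i :: nat \<Rightarrow> 'a::field) \<noteq> (\<Sum>c\<in>X. basis_vec c)"
proof
  assume eq: "(basis_vec i :: nat \<Rightarrow> 'a) = (\<Sum>c\<in>X. basis_vec c)"
  obtain j where "j \<in> X" "j \<noteq> i"
    using assms by (metis card_le_Suc0_iff_eq not_less_eq_eq numeral_2_eq_2)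
  then have "(basis_vec i :: nat \<Rightarrow> 'a) j \<noteq> (\<Sum>c\<in>X. basis_vec c) j"
    using assms(1) by (simp add: sum_basis_vec_apply) (simp add: basis_vec_def)
  then show False using eq by simp
qed

lemma basis_vec_in_span_of_sums:
  fixes T :: "(nat \<Rightarrow> 'a::field) set"
  assumes fin: "finite P" "finite Q" and i: "i \<in> P" "i \<notin> Q"
    and sub: "P - Q - {i} \<subseteq> E" "Q - P \<subseteq> E"
    and span: "(\<Sum>c\<in>P. basis_vec c) \<in> fspan T" "(\<Sum>c\<in>Q. basis_vec c) \<in> fspan T"
      "\<And>e. e \<in> E \<Longrightarrow> basis_vec e \<in> fspan T"
  shows "basis_vec i \<in> fspan T"
proof -
  interpret module "fscale :: 'a \<Rightarrow> _" by (rule module_fscale)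
  have "(basis_vec i :: nat \<Rightarrow> 'a) = (\<Sum>c\<in>P. basis_vec c) - (\<Sum>c\<in>Q. basis_vec c)
      - (\<Sum>c\<in>P - Q - {i}. basis_vec c) + (\<Sum>c\<in>Q - P. basis_vec c)"
    using fin i by (simp add: fun_eq_iff sum_basis_vec_apply) (auto simp: basis_vec_def)
  moreover have "(\<Sum>c\<in>P - Q - {i}. basis_vec c) \<in> span T" "(\<Sum>c\<in>Q - P. basis_vec c) \<in> span T"
    using sub span(3) by (auto intro: span_sum)
  ultimately show ?thesis using span(1,2) by (metis span_add span_diff)
qed

section \<open>Counting subsets\<close>

lemma card_subsets_containing:
  assumes "finite X" "V \<subseteq> X" "card V \<le> k"
  shows "card {B. B \<subseteq> X \<and> card B = k \<and> V \<subseteq> B} = (card X - card V) choose (k - card V)"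
proof -
  have fin: "finite V" "\<And>B. B \<subseteq> X \<Longrightarrow> finite B" using assms finite_subset by blast+
  have "{B. B \<subseteq> X \<and> card B = k \<and> V \<subseteq> B} = (\<lambda>D. D \<union> V) ` {D. D \<subseteq> X - V \<and> card D = k - card V}"
  proof (intro equalityI subsetI)
    fix B assume "B \<in> {B. B \<subseteq> X \<and> card B = k \<and> V \<subseteq> B}"
    then show "B \<in> (\<lambda>D. D \<union> V) ` {D. D \<subseteq> X - V \<and> card D = k - card V}"
      using fin by (intro image_eqI[of _ _ "B - V"]) (auto simp: card_Diff_subset)
  next
    fix B assume "B \<in> (\<lambda>D. D \<union> V) ` {D. D \<subseteq> X - V \<and> card D = k - card V}"
    then obtain D where D: "D \<subseteq> X - V" "card D = k - card V" "B = D \<union> V" by auto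
    have "finite D" "D \<inter> V = {}" using D(1) fin(2) by blast+
    then have "card B = card D + card V" using D(3) fin(1) by (simp add: card_Un_disjoint)
    then show "B \<in> {B. B \<subseteq> X \<and> card B = k \<and> V \<subseteq> B}"
      using D assms(2,3) by auto
  qed
  moreover have "inj_on (\<lambda>D. D \<union> V) {D. D \<subseteq> X - V \<and> card D = k - card V}"
    by (rule inj_onI) blast
  ultimately show ?thesis
    using assms fin by (simp add: card_image n_subsets card_Diff_subset)
qed

lemma card_splittings:
  assumes "finite S" "D \<subseteq> S" "card D = b + c"
  shows "card {(B, C). B \<subseteq> S \<and> card B = b \<and> C \<subseteq> S - B \<and> card C = c \<and> B \<union> C = D} = card D choose b"
proof -
  have fin: "finite D" using assms finite_subset by blast
  have "{(B, C). B \<subseteq> S \<and> card B = b \<and> C \<subseteq> S - B \<and> card C = c \<and> B \<union> C = D}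
      = (\<lambda>B. (B, D - B)) ` {B. B \<subseteq> D \<and> card B = b}"
  proof (intro equalityI subsetI)
    fix x assume "x \<in> {(B, C). B \<subseteq> S \<and> card B = b \<and> C \<subseteq> S - B \<and> card C = c \<and> B \<union> C = D}"
    then obtain B C where "x = (B, C)" "card B = b" "C \<subseteq> S - B" "B \<union> C = D" by blast
    moreover from this have "C = D - B" by blast
    ultimately show "x \<in> (\<lambda>B. (B, D - B)) ` {B. B \<subseteq> D \<and> card B = b}" by blast
  next
    fix x assume "x \<in> (\<lambda>B. (B, D - B)) ` {B. B \<subseteq> D \<and> card B = b}"
    then obtain B where "x = (B, D - B)" "B \<subseteq> D" "card B = b" by blast
    then show "x \<in> {(B, C). B \<subseteq> S \<and> card B = b \<and> C \<subseteq> S - B \<and> card C = c \<and> B \<union> C = D}"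
      using assms fin by (auto simp: card_Diff_subset finite_subset)
  qed
  moreover have "inj_on (\<lambda>B. (B, D - B)) X" for X by (rule inj_onI) simp
  ultimately show ?thesis using fin by (simp add: card_image n_subsets)
qed

text \<open>The uncovered part \<open>V = S - (B \<union> C)\<close> is an \<open>m\<close>-subset of \<open>W\<close>, and the pair is recovered
  from \<open>V\<close> and an arbitrary \<open>b\<close>-subset \<open>B\<close> of \<open>S - V\<close>.\<close>
lemma card_splittings_uncovered_within:
  assumes "finite S" "W \<subseteq> S" "card S = b + c + m"
  shows "card {(B, C). B \<subseteq> S \<and> card B = b \<and> C \<subseteq> S - B \<and> card C = c \<and> S - (B \<union> C) \<subseteq> W}
    = (card W choose m) * ((card S - m) choose b)"
proof -
  have fin: "\<And>X. X \<subseteq> S \<Longrightarrow> finite X" using assms(1) finite_subset by blast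
  define f where "f = (\<lambda>(V, B). (B, S - V - B))"
  define D where "D = (SIGMA V:{V. V \<subseteq> W \<and> card V = m}. {B. B \<subseteq> S - V \<and> card B = b})"
  have "{(B, C). B \<subseteq> S \<and> card B = b \<and> C \<subseteq> S - B \<and> card C = c \<and> S - (B \<union> C) \<subseteq> W} = f ` D"
  proof (intro equalityI subsetI)
    fix x assume "x \<in> {(B, C). B \<subseteq> S \<and> card B = b \<and> C \<subseteq> S - B \<and> card C = c \<and> S - (B \<union> C) \<subseteq> W}"
    then obtain B C where x: "x = (B, C)" "B \<subseteq> S" "card B = b" "C \<subseteq> S - B" "card C = c"
        "S - (B \<union> C) \<subseteq> W" by blast
    have "finite B" "finite C" using x fin by (meson Diff_subset subset_trans)+
    then have "card (B \<union> C) = card B + card C" using x by (intro card_Un_disjoint) auto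
    moreover have "B \<union> C \<subseteq> S" using x by blast
    ultimately have "card (S - (B \<union> C)) = card S - (card B + card C)"
      using fin by (simp add: card_Diff_subset)
    then have "(S - (B \<union> C), B) \<in> D" using x assms(3) by (auto simp: D_def)
    moreover have "f (S - (B \<union> C), B) = x" using x by (auto simp: f_def)
    ultimately show "x \<in> f ` D" by force
  next
    fix x assume "x \<in> f ` D"
    then obtain V B where x: "x = (B, S - V - B)" "V \<subseteq> W" "card V = m" "B \<subseteq> S - V" "card B = b"
      by (auto simp: D_def f_def)
    have "V \<subseteq> S" "finite B" using x(2,4) assms(2) fin by blast+
    then have "card (S - V - B) = card S - m - b"
      using x(3-5) fin card_Diff_subset[of B "S - V"] card_Diff_subset[of V S] by simp
    then show "x \<in> {(B, C). B \<subseteq> S \<and> card B = b \<and> C \<subseteq> S - B \<and> card C = c \<and> S - (B \<union> C) \<subseteq> W}"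
      using x assms(3) by auto
  qed
  moreover have "inj_on f D"
    using assms(2) by (fastforce simp: inj_on_def f_def D_def)
  moreover have "card D = card {V. V \<subseteq> W \<and> card V = m} * ((card S - m) choose b)"
    unfolding D_def
  proof (rule card_Sigma_const)
    fix V assume "V \<in> {V. V \<subseteq> W \<and> card V = m}"
    then show "card {B. B \<subseteq> S - V \<and> card B = b} = (card S - m) choose b"
      using assms(1,2) fin by (auto simp: n_subsets card_Diff_subset)
  qed (use assms fin in auto)
  ultimately show ?thesis using fin assms(2) by (simp add: card_image n_subsets)
qed

section \<open>Binomial identities\<close>

lemma choose_balance_first:
  fixes n t x y :: nat
  assumes "n * x = t * (n choose t) * y" "0 < n" "0 < t"
  shows "((n - 1) choose (t - 1)) * y = x"
proof -
  have "n * ((n - 1) choose (t - 1)) = (n choose t) * t"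
    using Suc_times_binomial_eq[of "n - 1" "t - 1"] assms(2,3) by simp
  then have "n * (((n - 1) choose (t - 1)) * y) = n * x"
    using assms(1) by (simp add: mult.commute mult.left_commute)
  then show ?thesis using assms(2) by simp
qed

lemma choose_balance_middle:
  fixes n a t x y :: nat
  assumes "(n choose (a + 1)) * x = (n choose (a + t)) * y" "a + t \<le> n" "1 \<le> t"
  shows "((n - a - 1) choose (t - 1)) * y = ((a + t) choose (t - 1)) * x"
proof -
  have "(n choose (a + t)) * ((a + t) choose (a + 1)) = (n choose (a + 1)) * ((n - (a + 1)) choose (t - 1))"
    using choose_mult[of "a + 1" "a + t" n] assms(2,3) by simp
  moreover have "(a + t) choose (a + 1) = (a + t) choose (t - 1)"
    using binomial_symmetric[of "a + 1" "a + t"] assms(3) by simp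
  ultimately have "(n choose (a + t)) * (((a + t) choose (t - 1)) * x)
      = (n choose (a + t)) * (((n - a - 1) choose (t - 1)) * y)"
    using assms(1) by (simp add: ac_simps)
  then show ?thesis using assms(2) by simp
qed

lemma choose_swap_mult:
  assumes "a + b \<le> n"
  shows "(n choose a) * ((n - a) choose b) = (n choose b) * ((n - b) choose a)"
  using choose_mult[of a "a + b" n] choose_mult[of b "a + b" n] binomial_symmetric[of a "a + b"] assms
  by simp

lemma choose_balance_last:
  fixes n t c m x y :: nat
  assumes "x * ((n - t) choose (c + 1)) = y" "n = c + t + 1 + m" "m < t"
  shows "((n - 1 - m) choose (t - 1 - m)) * y = ((t - 1) choose m) * ((n - 1 - m) choose (t - 1)) * x"
proof -
  define N where "N = n - 1"
  have sym: "(n - t) choose (c + 1) = (n - t) choose m"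
    using binomial_symmetric[of m "c + 1 + m"] assms(2,3) by (simp add: add.commute)
  have N: "N - (t - 1) = n - t" "n - 1 - m = N - m" using assms(2,3) by (auto simp: N_def)
  have "(N choose m) * (((n - 1 - m) choose (t - 1 - m)) * y)
      = ((N choose m) * ((N - m) choose (t - 1 - m))) * ((n - t) choose m) * x"
    using assms(1) sym N(2) by (simp add: ac_simps)
  also have "\<dots> = ((t - 1) choose m) * ((N choose (t - 1)) * ((N - (t - 1)) choose m)) * x"
    using choose_mult[of m "t - 1" N] assms(2,3) N(1) by (simp add: N_def ac_simps)
  also have "\<dots> = ((t - 1) choose m) * ((N choose m) * ((N - m) choose (t - 1))) * x"
    using choose_swap_mult[of m "t - 1" N] assms(2,3) by (simp add: N_def)
  also have "\<dots> = (N choose m) * (((t - 1) choose m) * ((n - 1 - m) choose (t - 1)) * x)"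
    using N(2) by (simp add: ac_simps)
  finally show ?thesis using assms(2,3) by (simp add: N_def)
qed

section \<open>The columns avoiding a basis vector\<close>

locale array_code_params =
  fixes p t q :: nat
  assumes two_le_t: "2 \<le> t" and three_le_q: "3 \<le> q"
    and p_gt: "(q - 1) * t < p" and p_lt: "p < q * t"
begin

lemma two_t_less_p: "2 * t < p"
proof -
  have "2 * t \<le> (q - 1) * t" using three_le_q by (intro mult_le_mono1) simp
  then show ?thesis using p_gt by linarith
qed

lemma q_minus_2_times_t_add_t: "(q - 2) * t + t = (q - 1) * t"
proof -
  have "q - 1 = Suc (q - 2)" using three_le_q by simp
  then show ?thesis by simp
qed

definition slack :: nat where
  "slack = p - (q - 1) * t - 1"

lemma p_eq_slack: "p = (q - 1) * t + 1 + slack"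
  using p_gt by (simp add: slack_def)

lemma slack_less_t: "slack < t"
proof -
  have "q * t = (q - 1) * t + t" using three_le_q by (cases q) auto
  then show ?thesis using p_lt p_gt by (simp add: slack_def)
qed

definition supports :: "nat \<Rightarrow> (nat set \<times> nat set) set" where
  "supports r =
     (if r = 1 then {(A, {}) | A. A \<subseteq> {1..p} \<and> card A = t}
      else if 1 < r \<and> r < q then
        {(B, C). B \<subseteq> {1..p} \<and> card B = t - 1 \<and> C \<subseteq> {1..p} - B \<and> card C = (r - 1) * t + 1}
      else if r = q then {(B, {}) | B. B \<subseteq> {1..p} \<and> card B = t - 1}
      else {})"

lemma mem_supports_middle:
  "1 < r \<Longrightarrow> r < q \<Longrightarrow>
    (B, C) \<in> supports r \<longleftrightarrow> B \<subseteq> {1..p} \<and> card B = t - 1 \<and> C \<subseteq> {1..p} - B \<and> card C = (r - 1) * t + 1"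
  by (auto simp: supports_def)

lemma mem_supports_last: "(B, C) \<in> supports q \<longleftrightarrow> C = {} \<and> B \<subseteq> {1..p} \<and> card B = t - 1"
  using three_le_q by (auto simp: supports_def)

lemma supports_type_range: "x \<in> supports r \<Longrightarrow> 1 \<le> r \<and> r \<le> q"
  using three_le_q by (auto simp: supports_def split: if_splits)

lemma supports_subset:
  assumes "(B, C) \<in> supports r"
  shows "B \<subseteq> {1..p} \<and> C \<subseteq> {1..p}"
proof -
  consider "r = 1" | "1 < r" "r < q" | "r = q"
    using supports_type_range[OF assms] by linarith
  then show ?thesis
    using assms three_le_q unfolding supports_def by cases auto
qed

lemma finite_supports: "finite (supports r)"
proof (rule finite_subset)
  show "supports r \<subseteq> Pow {1..p} \<times> Pow {1..p}" using supports_subset by fast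
qed simp

lemma card_support_union:
  assumes "(B, C) \<in> supports j" "j < q"
  shows "card (B \<union> C) = j * t"
proof (cases "j = 1")
  case False
  then have "1 < j" using assms supports_type_range[OF assms(1)] by simp
  then have "B \<subseteq> {1..p}" "C \<subseteq> {1..p} - B" "card B = t - 1" "card C = (j - 1) * t + 1"
    using assms by (auto simp: mem_supports_middle)
  moreover have "finite B" "finite C"
    by (rule finite_subset[OF \<open>B \<subseteq> {1..p}\<close>], simp, rule finite_subset[OF \<open>C \<subseteq> {1..p} - B\<close>], simp)
  ultimately have "card (B \<union> C) = (t - 1) + ((j - 1) * t + 1)"
    by (subst card_Un_disjoint) auto
  moreover have "(j - 1) * t + t = j * t" using \<open>1 < j\<close> by (cases j) auto
  ultimately show ?thesis using two_le_t by simp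
qed (use assms in \<open>auto simp: supports_def\<close>)

lemma array_code_eq: "array_code p t q xi = (\<Union>r. column r ` (supports r \<times> {..<xi r}))"
proof -
  have "l \<in> array_code p t q xi \<longleftrightarrow> l \<in> column (fst l) ` (supports (fst l) \<times> {..<xi (fst l)})" for l
  proof -
    obtain r B C k where l: "l = (r, B, C, k)" by (metis prod.exhaust)
    consider "r = 1" | "1 < r" "r < q" | "r = q" | "r = 0 \<or> q < r" by linarith
    then show ?thesis
      using three_le_q unfolding l
      by cases (auto simp: array_code_def column_image_iff supports_def)
  qed
  then show ?thesis by (auto simp: column_image_iff)
qed

lemma basis_vec_in_cells_iff:
  assumes "(B, C) \<in> supports r"
  shows "(basis_vec i :: nat \<Rightarrow> 'a::field) \<in> cells p q (r, B, C, k) \<longleftrightarrow> i \<in> B"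
proof -
  consider "r = 1" "C = {}" | "1 < r" "r < q" "C \<subseteq> {1..p}" "card C = (r - 1) * t + 1"
    | "r = q" "B \<subseteq> {1..p}" "card B = t - 1"
    using assms three_le_q by (auto simp: supports_def split: if_splits)
  then show ?thesis
  proof cases
    case 2
    have "1 * t + 1 \<le> (r - 1) * t + 1" using \<open>1 < r\<close> by (intro add_mono mult_le_mono1) auto
    then have "(basis_vec i :: nat \<Rightarrow> 'a) \<noteq> (\<Sum>c\<in>C. basis_vec c)"
      using 2 two_le_t finite_subset by (intro basis_vec_neq_sum) auto
    then show ?thesis using 2 by (auto simp: cells_def)
  next
    case 3
    have "card ({1..p} - B) = p - (t - 1)"
      using 3 card_Diff_subset[OF finite_subset[OF \<open>B \<subseteq> {1..p}\<close>]] by simp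
    then have "(basis_vec i :: nat \<Rightarrow> 'a) \<noteq> (\<Sum>c\<in>{1..p} - B. basis_vec c)"
      using two_t_less_p two_le_t by (intro basis_vec_neq_sum) auto
    then show ?thesis using 3 three_le_q by (auto simp: cells_def)
  qed (simp add: cells_def)
qed

definition left_supports :: "nat \<Rightarrow> nat \<Rightarrow> (nat set \<times> nat set) set" where
  "left_supports i j = {(B, C) \<in> supports j. i \<notin> B \<union> C}"

definition right_supports :: "nat \<Rightarrow> nat \<Rightarrow> (nat set \<times> nat set) set" where
  "right_supports i j = {(B, C) \<in> supports (j + 1). i \<notin> B \<and> (j + 1 < q \<longrightarrow> i \<in> C)}"

lemma left_supports_first:
  "left_supports i 1 = (\<lambda>A. (A, {})) ` {A. A \<subseteq> {1..p} - {i} \<and> card A = t}"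
  by (auto simp: left_supports_def supports_def)

lemma left_supports_middle:
  assumes "1 < j" "j < q"
  shows "left_supports i j = {(B, C). B \<subseteq> {1..p} - {i} \<and> card B = t - 1 \<and> C \<subseteq> {1..p} - {i} - B
    \<and> card C = (j - 1) * t + 1}"
  using assms by (auto simp: left_supports_def mem_supports_middle)

lemma left_supports_last:
  "left_supports i (q - 1) = {(B, C). B \<subseteq> {1..p} - {i} \<and> card B = t - 1 \<and> C \<subseteq> {1..p} - {i} - B
    \<and> card C = (q - 2) * t + 1}"
  using three_le_q by (subst left_supports_middle) (auto simp: numeral_2_eq_2)

lemma right_supports_lower:
  assumes "1 \<le> j" "j + 1 < q"
  shows "right_supports i j = {(B, C). C \<subseteq> {1..p} \<and> i \<in> C \<and> card C = j * t + 1 \<and> B \<subseteq> {1..p} - C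
    \<and> card B = t - 1}"
  using assms by (auto simp: right_supports_def mem_supports_middle)

lemma right_supports_last:
  "right_supports i (q - 1) = (\<lambda>B. (B, {})) ` {B. B \<subseteq> {1..p} - {i} \<and> card B = t - 1}"
  using three_le_q by (auto simp: right_supports_def mem_supports_last)

lemma finite_left_supports: "finite (left_supports i j)"
  by (rule finite_subset[OF _ finite_supports]) (auto simp: left_supports_def)

lemma finite_right_supports: "finite (right_supports i j)"
  by (rule finite_subset[OF _ finite_supports]) (auto simp: right_supports_def)

definition left_block :: "(nat \<Rightarrow> nat) \<Rightarrow> nat \<Rightarrow> nat \<Rightarrow> label set" where
  "left_block xi i j = column j ` (left_supports i j \<times> {..<xi j})"

definition right_block :: "(nat \<Rightarrow> nat) \<Rightarrow> nat \<Rightarrow> nat \<Rightarrow> label set" where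
  "right_block xi i j = column (j + 1) ` (right_supports i j \<times> {..<xi (j + 1)})"

definition block_edge :: "nat \<Rightarrow> nat \<Rightarrow> nat set \<times> nat set \<Rightarrow> nat set \<times> nat set \<Rightarrow> bool" where
  "block_edge i j x y \<longleftrightarrow>
     (if j + 1 < q then snd y = insert i (fst x \<union> snd x)
      else {1..p} - {i} - (fst x \<union> snd x) \<subseteq> fst y)"

lemma avoiding_supports_split:
  "{(B, C) \<in> supports r. i \<notin> B} =
     (if r < q then left_supports i r else {}) \<union> (if 1 < r then right_supports i (r - 1) else {})"
proof -
  consider "r = 1" | "1 < r" "r < q" | "r = q" | "r = 0 \<or> q < r" by linarith
  then show ?thesis
    using three_le_q
    by cases (auto simp: left_supports_def right_supports_def supports_def)
qed

lemma mem_blocks_iff: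
  "(r, B, C, k) \<in> (\<Union>j\<in>{1..q-1}. left_block xi i j) \<union> (\<Union>j\<in>{1..q-1}. right_block xi i j) \<longleftrightarrow>
     (B, C) \<in> (if r < q then left_supports i r else {}) \<union> (if 1 < r then right_supports i (r - 1) else {})
     \<and> k < xi r"
proof
  assume "(B, C) \<in> (if r < q then left_supports i r else {}) \<union> (if 1 < r then right_supports i (r - 1) else {})
    \<and> k < xi r"
  then consider "r < q" "(B, C) \<in> left_supports i r" "k < xi r"
    | "1 < r" "(B, C) \<in> right_supports i (r - 1)" "k < xi r"
    by (auto split: if_splits)
  then show "(r, B, C, k) \<in> (\<Union>j\<in>{1..q-1}. left_block xi i j) \<union> (\<Union>j\<in>{1..q-1}. right_block xi i j)"
  proof cases
    case 1
    then have "r \<in> {1..q-1}" using supports_type_range[of "(B, C)" r] by (auto simp: left_supports_def)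
    then show ?thesis using 1 by (auto simp: left_block_def column_image_iff)
  next
    case 2
    then have "(B, C) \<in> supports r" by (simp add: right_supports_def)
    then have "r - 1 \<in> {1..q-1}" "r - 1 + 1 = r" using 2(1) supports_type_range[of "(B, C)" r] by auto
    moreover have "(r, B, C, k) \<in> right_block xi i (r - 1)"
      using 2 \<open>r - 1 + 1 = r\<close> by (simp add: right_block_def column_image_iff)
    ultimately show ?thesis by blast
  qed
qed (auto simp: left_block_def right_block_def column_image_iff)

lemma avoiding_columns_eq_blocks:
  "{l \<in> array_code p t q xi. (basis_vec i :: nat \<Rightarrow> 'a::field) \<notin> cells p q l}
    = (\<Union>j\<in>{1..q-1}. left_block xi i j) \<union> (\<Union>j\<in>{1..q-1}. right_block xi i j)"
proof -
  have "l \<in> array_code p t q xi \<and> (basis_vec i :: nat \<Rightarrow> 'a) \<notin> cells p q l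
      \<longleftrightarrow> l \<in> (\<Union>j\<in>{1..q-1}. left_block xi i j) \<union> (\<Union>j\<in>{1..q-1}. right_block xi i j)" for l
  proof -
    obtain r B C k where l: "l = (r, B, C, k)" by (metis prod.exhaust)
    have "l \<in> array_code p t q xi \<and> (basis_vec i :: nat \<Rightarrow> 'a) \<notin> cells p q l
        \<longleftrightarrow> (B, C) \<in> {(B, C) \<in> supports r. i \<notin> B} \<and> k < xi r"
      unfolding l array_code_eq by (auto simp: column_image_iff basis_vec_in_cells_iff)
    then show ?thesis unfolding l mem_blocks_iff avoiding_supports_split .
  qed
  then show ?thesis by blast
qed

lemma fst_left_block: "l \<in> left_block xi i j \<Longrightarrow> fst l = j"
  by (auto simp: left_block_def column_def)

lemma left_right_blocks_disjoint:
  "(\<Union>j\<in>{1..q-1}. left_block xi i j) \<inter> (\<Union>j\<in>{1..q-1}. right_block xi i j) = {}"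
proof -
  have False if "(r, B, C, k) \<in> left_block xi i j" "(r, B, C, k) \<in> right_block xi i j'" "j \<in> {1..q-1}"
    for r B C k j j'
    using that by (auto simp: left_block_def right_block_def column_image_iff left_supports_def right_supports_def)
  then show ?thesis by fast
qed

lemma disjoint_family_right_blocks: "disjoint_family_on (right_block xi i) J"
  by (auto simp: disjoint_family_on_def right_block_def column_def)

lemma sum_support_in_span_cells:
  assumes "(B, C) \<in> supports r" "r < q"
  shows "(\<Sum>c\<in>C. basis_vec c) \<in> fspan (cells p q (r, B, C, k) :: (nat \<Rightarrow> 'a::field) set)"
proof (cases "r = 1")
  case True
  then have "C = {}" using assms(1) by (simp add: supports_def)
  then show ?thesis using module.span_zero[OF module_fscale] by simp
next
  case False
  then have "1 < r" using supports_type_range[OF assms(1)] by simp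
  then have "(\<Sum>c\<in>C. basis_vec c) \<in> (cells p q (r, B, C, k) :: (nat \<Rightarrow> 'a) set)"
    using assms(2) by (simp add: cells_def)
  then show ?thesis by (rule module.span_base[OF module_fscale])
qed

lemma basis_vec_in_span_of_block_edge:
  assumes i: "i \<in> {1..p}" and j: "j \<in> {1..q-1}"
    and L: "(B, C) \<in> left_supports i j" and R: "(B', C') \<in> right_supports i j"
    and edge: "block_edge i j (B, C) (B', C')"
  shows "(basis_vec i :: nat \<Rightarrow> 'a::field) \<in> fspan (cells p q (j, B, C, k) \<union> cells p q (j + 1, B', C', k'))"
proof -
  interpret module "fscale :: 'a \<Rightarrow> _" by (rule module_fscale)
  define T where "T = (cells p q (j, B, C, k) \<union> cells p q (j + 1, B', C', k') :: (nat \<Rightarrow> 'a) set)"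
  have fin: "finite X" if "X \<subseteq> {1..p}" for X using that finite_subset by blast
  have supp: "(B, C) \<in> supports j" "(B', C') \<in> supports (j + 1)" "i \<notin> B \<union> C" "i \<notin> B'"
    using L R by (auto simp: left_supports_def right_supports_def)
  then have sub: "B \<subseteq> {1..p}" "C \<subseteq> {1..p}" "B' \<subseteq> {1..p}" "C' \<subseteq> {1..p}"
    using supports_subset by blast+
  have singletons: "basis_vec e \<in> span T" if "e \<in> B \<union> B'" for e
    using that by (intro span_base) (auto simp: T_def cells_def)
  have "(\<Sum>c\<in>C. basis_vec c) \<in> span (cells p q (j, B, C, k))"
    using sum_support_in_span_cells[OF supp(1), where 'a = 'a] j three_le_q by auto
  then have sum_C: "(\<Sum>c\<in>C. basis_vec c) \<in> span T"
    using span_mono[of "cells p q (j, B, C, k)" T] by (auto simp: T_def)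
  have "basis_vec i \<in> span T"
  proof (cases "j + 1 < q")
    case True
    have C': "C' = insert i (B \<union> C)" using edge True by (simp add: block_edge_def)
    show ?thesis
    proof (rule basis_vec_in_span_of_sums[where P = C' and Q = C and E = B])
      show "finite C'" "finite C" using sub fin by auto
      show "i \<in> C'" "i \<notin> C" "C' - C - {i} \<subseteq> B" "C - C' \<subseteq> B" using C' supp by auto
      show "(\<Sum>c\<in>C'. basis_vec c) \<in> span T"
        using True j by (intro span_base) (auto simp: T_def cells_def)
    qed (use sum_C singletons in auto)
  next
    case False
    then have "j + 1 = q" using j by auto
    have uncovered: "{1..p} - {i} - (B \<union> C) \<subseteq> B'" using edge False by (simp add: block_edge_def)
    show ?thesis
    proof (rule basis_vec_in_span_of_sums[where P = "{1..p} - B'" and Q = C and E = "B \<union> B'"])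
      show "finite ({1..p} - B')" "finite C" using sub fin by auto
      show "i \<in> {1..p} - B'" "i \<notin> C" using i supp by auto
      show "{1..p} - B' - C - {i} \<subseteq> B \<union> B'" "C - ({1..p} - B') \<subseteq> B \<union> B'" using uncovered sub by auto
      show "(\<Sum>c\<in>{1..p} - B'. basis_vec c) \<in> span T"
        using \<open>j + 1 = q\<close> three_le_q by (intro span_base) (auto simp: T_def cells_def)
    qed (use sum_C singletons in auto)
  qed
  then show ?thesis by (simp add: T_def)
qed

lemma basis_vec_in_span_of_matched_columns:
  assumes "i \<in> {1..p}" "j \<in> {1..q-1}" "l \<in> left_block xi i j" "l' \<in> right_block xi i j"
    and "block_edge i j (support l) (support l')"
  shows "(basis_vec i :: nat \<Rightarrow> 'a::field) \<in> fspan (cells p q l \<union> cells p q l')"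
proof -
  obtain B C k B' C' k' where "l = (j, B, C, k)" "(B, C) \<in> left_supports i j"
      "l' = (j + 1, B', C', k')" "(B', C') \<in> right_supports i j"
    using assms(3,4) by (auto simp: left_block_def right_block_def column_def)
  then show ?thesis using assms basis_vec_in_span_of_block_edge by simp
qed

lemma card_lower_right_neighbours:
  assumes i: "i \<in> {1..p}" and j: "1 \<le> j" "j + 1 < q" and x: "x \<in> left_supports i j"
  shows "card {y \<in> right_supports i j. block_edge i j x y} = (p - j * t - 1) choose (t - 1)"
proof -
  obtain B C where BC: "x = (B, C)" "(B, C) \<in> supports j" "i \<notin> B \<union> C"
    using x by (auto simp: left_supports_def)
  define D where "D = insert i (B \<union> C)"
  have BC_sub: "B \<union> C \<subseteq> {1..p}" using supports_subset[OF BC(2)] by blast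
  then have "finite (B \<union> C)" by (rule finite_subset) simp
  moreover have "card (B \<union> C) = j * t" using BC(2) j by (intro card_support_union) auto
  ultimately have D: "D \<subseteq> {1..p}" "card D = j * t + 1"
    using i BC(3) BC_sub by (auto simp: D_def)
  have "{y \<in> right_supports i j. block_edge i j x y}
      = (\<lambda>B'. (B', D)) ` {B'. B' \<subseteq> {1..p} - D \<and> card B' = t - 1}"
    using j D unfolding right_supports_lower[OF j] by (auto simp: block_edge_def BC(1) D_def)
  moreover have "inj_on (\<lambda>B'. (B', D)) {B'. B' \<subseteq> {1..p} - D \<and> card B' = t - 1}"
    by (rule inj_onI) simp
  moreover have "card ({1..p} - D) = p - j * t - 1"
    using D card_Diff_subset[OF finite_subset[OF D(1)]] by simp
  ultimately show ?thesis by (simp add: card_image n_subsets)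
qed

lemma card_lower_left_neighbours:
  assumes i: "i \<in> {1..p}" and j: "1 \<le> j" "j + 1 < q" and y: "y \<in> right_supports i j"
  shows "card {x \<in> left_supports i j. block_edge i j x y} = (if j = 1 then 1 else (j * t) choose (t - 1))"
proof -
  obtain B' C' where y': "y = (B', C')" "C' \<subseteq> {1..p}" "i \<in> C'" "card C' = j * t + 1"
    using y j by (auto simp: right_supports_lower)
  define D where "D = C' - {i}"
  have D: "D \<subseteq> {1..p} - {i}" "card D = j * t"
    using y' finite_subset[of C' "{1..p}"] by (auto simp: D_def)
  have edge_iff: "block_edge i j (B, C) y \<longleftrightarrow> B \<union> C = D" if "i \<notin> B \<union> C" for B C
    using that j y' by (auto simp: block_edge_def D_def)
  show ?thesis
  proof (cases "j = 1")
    case True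
    have "{x \<in> left_supports i j. block_edge i j x y} = {(D, {})}"
      using D edge_iff unfolding True left_supports_first by auto
    then show ?thesis using True by simp
  next
    case False
    have "{x \<in> left_supports i j. block_edge i j x y} = {(B, C). B \<subseteq> {1..p} - {i} \<and> card B = t - 1
        \<and> C \<subseteq> {1..p} - {i} - B \<and> card C = (j - 1) * t + 1 \<and> B \<union> C = D}"
      using False j edge_iff by (auto simp: left_supports_middle)
    also have "card \<dots> = card D choose (t - 1)"
    proof (rule card_splittings)
      have "(j - 1) * t + t = j * t" using False j by (cases j) auto
      then show "card D = t - 1 + ((j - 1) * t + 1)" using D two_le_t by simp
    qed (use D in auto)
    finally show ?thesis using False D by simp
  qed
qed

lemma card_last_right_neighbours:
  assumes i: "i \<in> {1..p}" and x: "x \<in> left_supports i (q - 1)"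
  shows "card {y \<in> right_supports i (q - 1). block_edge i (q - 1) x y} = (p - 1 - slack) choose (t - 1 - slack)"
proof -
  define S where "S = {1..p} - {i}"
  obtain B C where BC: "x = (B, C)" "(B, C) \<in> supports (q - 1)" "i \<notin> B \<union> C"
    using x by (auto simp: left_supports_def)
  have sub: "B \<union> C \<subseteq> S" using supports_subset[OF BC(2)] BC(3) by (auto simp: S_def)
  have fin: "finite S" "finite (B \<union> C)" using finite_subset[OF sub] by (auto simp: S_def)
  define V where "V = S - (B \<union> C)"
  have "card (B \<union> C) = (q - 1) * t" using BC(2) three_le_q by (intro card_support_union) auto
  moreover have "card S = p - 1" using i by (simp add: S_def)
  moreover have "card V = card S - card (B \<union> C)"
    unfolding V_def using card_Diff_subset[OF fin(2) sub] .
  ultimately have V: "card V = slack" "V \<subseteq> S"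
    using p_eq_slack by (simp_all add: V_def)
  have "block_edge i (q - 1) x y \<longleftrightarrow> V \<subseteq> fst y" for y
    using three_le_q by (simp add: block_edge_def BC(1) V_def S_def)
  then have "{y \<in> right_supports i (q - 1). block_edge i (q - 1) x y}
      = (\<lambda>B'. (B', {})) ` {B'. B' \<subseteq> S \<and> card B' = t - 1 \<and> V \<subseteq> B'}"
    unfolding right_supports_last S_def by auto
  moreover have "inj_on (\<lambda>B'. (B', {} :: nat set)) {B'. B' \<subseteq> S \<and> card B' = t - 1 \<and> V \<subseteq> B'}"
    by (rule inj_onI) simp
  moreover have "card {B'. B' \<subseteq> S \<and> card B' = t - 1 \<and> V \<subseteq> B'} = (card S - card V) choose (t - 1 - card V)"
    using V slack_less_t by (intro card_subsets_containing fin(1)) auto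
  ultimately show ?thesis using V \<open>card S = p - 1\<close> by (simp add: card_image)
qed

lemma card_last_left_neighbours:
  assumes i: "i \<in> {1..p}" and y: "y \<in> right_supports i (q - 1)"
  shows "card {x \<in> left_supports i (q - 1). block_edge i (q - 1) x y}
    = ((t - 1) choose slack) * ((p - 1 - slack) choose (t - 1))"
proof -
  define S where "S = {1..p} - {i}"
  obtain B' where B': "y = (B', {})" "B' \<subseteq> S" "card B' = t - 1"
    using y unfolding right_supports_last S_def by auto
  have "{x \<in> left_supports i (q - 1). block_edge i (q - 1) x y} = {(B, C). B \<subseteq> S \<and> card B = t - 1
      \<and> C \<subseteq> S - B \<and> card C = (q - 2) * t + 1 \<and> S - (B \<union> C) \<subseteq> B'}"
    using three_le_q unfolding left_supports_last by (auto simp: block_edge_def B'(1) S_def)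
  also have "card \<dots> = (card B' choose slack) * ((card S - slack) choose (t - 1))"
  proof (rule card_splittings_uncovered_within)
    show "card S = t - 1 + ((q - 2) * t + 1) + slack"
      using i p_eq_slack two_le_t q_minus_2_times_t_add_t by (simp add: S_def)
  qed (use B' in \<open>auto simp: S_def\<close>)
  finally show ?thesis using B' i by (simp add: S_def)
qed

end

section \<open>Matching the blocks\<close>

locale balanced_array_code = array_code_params +
  fixes xi :: "nat \<Rightarrow> nat"
  assumes xi_pos: "\<And>r. 1 \<le> r \<Longrightarrow> r \<le> q \<Longrightarrow> 0 < xi r"
    and xi_first: "(p - t) * xi 1 = t * ((p - t) choose t) * xi 2"
    and xi_middle: "\<And>r. 2 \<le> r \<Longrightarrow> r \<le> q - 2 \<Longrightarrow>
      ((p - t) choose ((r - 1) * t + 1)) * xi r = ((p - t) choose (r * t)) * xi (r + 1)"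
    and xi_last: "xi (q - 1) * ((p - t) choose ((q - 2) * t + 1)) = xi q"
begin

lemma lower_block_balance:
  assumes j: "1 \<le> j" "j + 1 < q"
  shows "((p - j * t - 1) choose (t - 1)) * xi (j + 1) = (if j = 1 then 1 else (j * t) choose (t - 1)) * xi j"
proof (cases "j = 1")
  case True
  have "((p - t - 1) choose (t - 1)) * xi 2 = xi 1"
    using choose_balance_first[OF xi_first] two_t_less_p two_le_t by simp
  then show ?thesis using True by (simp add: numeral_2_eq_2)
next
  case False
  have jt: "(j - 1) * t + t = j * t" using j by (cases j) auto
  have "(j + 1) * t \<le> (q - 1) * t" using j by (intro mult_le_mono1) simp
  then have "j * t + t < p" using p_gt by simp
  then have "((p - t - (j - 1) * t - 1) choose (t - 1)) * xi (j + 1) = (((j - 1) * t + t) choose (t - 1)) * xi j"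
    using xi_middle[of j] False j two_le_t jt by (intro choose_balance_middle) auto
  moreover have "p - t - (j - 1) * t - 1 = p - j * t - 1" using jt by simp
  ultimately show ?thesis using False jt by simp
qed

lemma last_block_balance:
  "((p - 1 - slack) choose (t - 1 - slack)) * xi q
    = ((t - 1) choose slack) * ((p - 1 - slack) choose (t - 1)) * xi (q - 1)"
proof (rule choose_balance_last[OF xi_last _ slack_less_t])
  show "p = (q - 2) * t + t + 1 + slack" using p_eq_slack q_minus_2_times_t_add_t by simp
qed

lemma lower_block_matching:
  assumes i: "i \<in> {1..p}" and j: "1 \<le> j" "j + 1 < q"
  shows "\<exists>H. bij_betw H (left_block xi i j) (right_block xi i j)
    \<and> (\<forall>l\<in>left_block xi i j. block_edge i j (support l) (support (H l)))"
  unfolding left_block_def right_block_def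
proof (rule biregular_copies_perfect_matching[OF finite_left_supports finite_right_supports
      card_lower_right_neighbours[OF i j] card_lower_left_neighbours[OF i j] lower_block_balance[OF j]])
  have "(j + 1) * t \<le> (q - 1) * t" using j by (intro mult_le_mono1) simp
  then show "0 < ((p - j * t - 1) choose (t - 1)) * xi (j + 1)"
    using p_gt j xi_pos[of "j + 1"] by simp
qed

lemma last_block_matching:
  assumes i: "i \<in> {1..p}"
  shows "\<exists>H. bij_betw H (left_block xi i (q - 1)) (right_block xi i (q - 1))
    \<and> (\<forall>l\<in>left_block xi i (q - 1). block_edge i (q - 1) (support l) (support (H l)))"
  unfolding left_block_def right_block_def
proof (rule biregular_copies_perfect_matching[OF finite_left_supports finite_right_supports
      card_last_right_neighbours[OF i] card_last_left_neighbours[OF i]])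
  show "((p - 1 - slack) choose (t - 1 - slack)) * xi (q - 1 + 1)
      = ((t - 1) choose slack) * ((p - 1 - slack) choose (t - 1)) * xi (q - 1)"
    using last_block_balance three_le_q by simp
  show "0 < ((p - 1 - slack) choose (t - 1 - slack)) * xi (q - 1 + 1)"
    using two_t_less_p xi_pos[of q] three_le_q by simp
qed

lemma block_matching:
  assumes "i \<in> {1..p}" "j \<in> {1..q-1}"
  shows "\<exists>H. bij_betw H (left_block xi i j) (right_block xi i j)
    \<and> (\<forall>l\<in>left_block xi i j. block_edge i j (support l) (support (H l)))"
proof (cases "j + 1 < q")
  case False
  then have "j = q - 1" using assms(2) by auto
  then show ?thesis using last_block_matching[OF assms(1)] by simp
qed (use assms lower_block_matching in auto)

lemma spanning_block_bijection:
  assumes i: "i \<in> {1..p}"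
  shows "\<exists>h. bij_betw h (\<Union>j\<in>{1..q-1}. left_block xi i j) (\<Union>j\<in>{1..q-1}. right_block xi i j)
    \<and> (\<forall>l\<in>\<Union>j\<in>{1..q-1}. left_block xi i j.
          (basis_vec i :: nat \<Rightarrow> 'a::field) \<in> fspan (cells p q l \<union> cells p q (h l)))"
proof -
  obtain H where H: "\<And>j. j \<in> {1..q-1} \<Longrightarrow> bij_betw (H j) (left_block xi i j) (right_block xi i j)
      \<and> (\<forall>l\<in>left_block xi i j. block_edge i j (support l) (support (H j l)))"
    using block_matching[OF i] by metis
  define h where "h l = H (fst l) l" for l
  have bij: "bij_betw h (\<Union>j\<in>{1..q-1}. left_block xi i j) (\<Union>j\<in>{1..q-1}. right_block xi i j)"
  proof (rule bij_betw_UNION_disjoint[OF disjoint_family_right_blocks])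
    fix j assume "j \<in> {1..q-1}"
    then show "bij_betw h (left_block xi i j) (right_block xi i j)"
      using H bij_betw_cong[of "left_block xi i j" h "H j"] fst_left_block by (auto simp: h_def)
  qed
  have span: "\<forall>l\<in>\<Union>j\<in>{1..q-1}. left_block xi i j.
      (basis_vec i :: nat \<Rightarrow> 'a) \<in> fspan (cells p q l \<union> cells p q (h l))"
  proof
    fix l assume "l \<in> (\<Union>j\<in>{1..q-1}. left_block xi i j)"
    then obtain j where j: "j \<in> {1..q-1}" "l \<in> left_block xi i j" by blast
    then have "h l \<in> right_block xi i j" "block_edge i j (support l) (support (h l))"
      using H[OF j(1)] fst_left_block[OF j(2)] by (auto simp: h_def bij_betw_def)
    then show "(basis_vec i :: nat \<Rightarrow> 'a) \<in> fspan (cells p q l \<union> cells p q (h l))"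
      using basis_vec_in_span_of_matched_columns[OF i j] by blast
  qed
  show ?thesis by (rule exI[of _ h], intro conjI bij span)
qed

lemma pairing_of_avoiding_columns:
  assumes i: "i \<in> {1..p}"
  shows "\<exists>M. (\<forall>e\<in>M. \<exists>c d. e = {c, d} \<and> c \<noteq> d \<and>
                basis_vec i \<in> fspan (cells p q c \<union> cells p q d :: (nat \<Rightarrow> 'a::field) set))
         \<and> \<Union>M = {l \<in> array_code p t q xi. (basis_vec i :: nat \<Rightarrow> 'a) \<notin> cells p q l}
         \<and> (\<forall>e\<in>M. \<forall>e'\<in>M. e \<noteq> e' \<longrightarrow> e \<inter> e' = {})"
proof -
  obtain h where bij: "bij_betw h (\<Union>j\<in>{1..q-1}. left_block xi i j) (\<Union>j\<in>{1..q-1}. right_block xi i j)"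
    and span: "\<forall>l\<in>\<Union>j\<in>{1..q-1}. left_block xi i j.
      (basis_vec i :: nat \<Rightarrow> 'a) \<in> fspan (cells p q l \<union> cells p q (h l))"
    using spanning_block_bijection[OF i] by blast
  show ?thesis
    unfolding avoiding_columns_eq_blocks[where 'a = 'a]
    by (rule pair_partition_of_bij_betw[OF bij left_right_blocks_disjoint]) (use span in blast)
qed

end

lemma ceiling_parameters:
  fixes p t :: nat and s :: rat
  assumes s: "2 < s" "s \<notin> \<int>" and t: "0 < t" and p: "of_nat p = s * of_nat t"
  shows "3 \<le> nat \<lceil>s\<rceil>" "(nat \<lceil>s\<rceil> - 1) * t < p" "p < nat \<lceil>s\<rceil> * t"
proof -
  have "s \<noteq> of_int \<lceil>s\<rceil>" using s(2) by (metis Ints_of_int)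
  then have c: "of_int \<lceil>s\<rceil> - 1 < s" "s < of_int \<lceil>s\<rceil>" using ceiling_correct[of s] by (auto simp: order_less_le)
  then show "3 \<le> nat \<lceil>s\<rceil>" using s(1) by linarith
  then have q: "of_nat (nat \<lceil>s\<rceil>) = (of_int \<lceil>s\<rceil> :: rat)" by simp
  have "of_nat p < (of_int \<lceil>s\<rceil> :: rat) * of_nat t" using p c t by simp
  then show "p < nat \<lceil>s\<rceil> * t" using q by (metis of_nat_less_iff of_nat_mult)
  have "of_nat ((nat \<lceil>s\<rceil> - 1) * t) = (of_int \<lceil>s\<rceil> - 1 :: rat) * of_nat t"
    using q \<open>3 \<le> nat \<lceil>s\<rceil>\<close> by (simp add: of_nat_diff)
  also have "\<dots> < of_nat p" using p c t by simp
  finally show "(nat \<lceil>s\<rceil> - 1) * t < p" by (simp only: of_nat_less_iff)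
qed

theorem theorem11:
  fixes p t :: nat and s :: rat and xi :: "nat \<Rightarrow> nat"
  assumes "s > 2" and "s \<notin> \<int>" and "t > 1" and "of_nat p = s * of_nat t"
    and "\<And>r. 1 \<le> r \<Longrightarrow> r \<le> nat \<lceil>s\<rceil> \<Longrightarrow> xi r > 0"
    and "xi (nat \<lceil>s\<rceil> - 1) * ((p - t) choose ((nat \<lceil>s\<rceil> - 2) * t + 1)) = xi (nat \<lceil>s\<rceil>)"
    and "\<And>r. 2 \<le> r \<Longrightarrow> r \<le> nat \<lceil>s\<rceil> - 2 \<Longrightarrow>
           ((p - t) choose ((r - 1) * t + 1)) * xi r = ((p - t) choose (r * t)) * xi (r + 1)"
    and "(p - t) * xi 1 = t * ((p - t) choose t) * xi 2"
  shows "\<forall>i\<in>{1..p}. \<exists>M.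
           (\<forall>e\<in>M. \<exists>c d. e = {c, d} \<and> c \<noteq> d \<and>
                basis_vec i \<in> fspan (cells p (nat \<lceil>s\<rceil>) c \<union> cells p (nat \<lceil>s\<rceil>) d
                                    :: (nat \<Rightarrow> 'a::{field,finite}) set))
         \<and> \<Union>M = {l \<in> array_code p t (nat \<lceil>s\<rceil>) xi.
                     (basis_vec i :: nat \<Rightarrow> 'a) \<notin> cells p (nat \<lceil>s\<rceil>) l}
         \<and> (\<forall>e\<in>M. \<forall>e'\<in>M. e \<noteq> e' \<longrightarrow> e \<inter> e' = {})"
proof -
  interpret balanced_array_code p t "nat \<lceil>s\<rceil>" xi
    using assms ceiling_parameters[OF assms(1,2) _ assms(4)] by unfold_locales auto
  show ?thesis by (intro ballI pairing_of_avoiding_columns)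
qed

end
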